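(* For every integer $n\ge 3$, $$M^L(n)\ \ge\ \frac{3\cdot 2^n}{3n-2}.$$
   Context: $\mathbb{F}=\{0,1\}$. The binary $n$-dimensional hypercube $\mathbb{F}^n$ is the graph on $\mathbb{F}^n$ where two words are adjacent iff their Hamming distance is $1$. For a nonempty $C\subseteq\mathbb{F}^n$, $I(\mathbf{x})=N[\mathbf{x}]\cap C$ with $N[\mathbf{x}]$ the words at Hamming distance $\le1$ from $\mathbf{x}$. $C$ is a local identifying code if $I(\mathbf{x})\ne\emptyset$ for all $\mathbf{x}$ and $I(\mathbf{x})\ne I(\mathbf{y})$ for all adjacent $\mathbf{x},\mathbf{y}$. $M^L(n)$ is the minimum cardinality of a local identifying code in $\mathbb{F}^n$. *)

theory Defs
  imports Complex_Main
begin

definition cube :: "nat \<Rightarrow> bool list set" where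
  "cube n = {xs. length xs = n}"

definition hamming :: "bool list \<Rightarrow> bool list \<Rightarrow> nat" where
  "hamming x y = card {i. i < length x \<and> x ! i \<noteq> y ! i}"

definition closed_nbhd :: "nat \<Rightarrow> bool list \<Rightarrow> bool list set" where
  "closed_nbhd n x = {y \<in> cube n. hamming x y \<le> 1}"

definition I_set :: "nat \<Rightarrow> bool list set \<Rightarrow> bool list \<Rightarrow> bool list set" where
  "I_set n C x = closed_nbhd n x \<inter> C"

definition local_identifying_code :: "nat \<Rightarrow> bool list set \<Rightarrow> bool" where
  "local_identifying_code n C \<longleftrightarrow>
     C \<subseteq> cube n \<and> C \<noteq> {} \<and>
     (\<forall>x \<in> cube n. I_set n C x \<noteq> {}) \<and>
     (\<forall>x \<in> cube n. \<forall>y \<in> cube n. hamming x y = 1 \<longrightarrow> I_set n C x \<noteq> I_set n C y)"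

definition M_L :: "nat \<Rightarrow> nat" where
  "M_L n = (LEAST k. \<exists>C. local_identifying_code n C \<and> card C = k)"

end

theory Submission imports Defs begin

text \<open>Discharging. Every word x must collect 6 units, and every codeword in I(x) pays it
  2 + share(x), where share(x) is 4, 1, 0 according as |I(x)| is 1, 2 or at least 3; then
  6 \<le> |I(x)|(2 + share(x)). Separation of adjacent words keeps the shares around a codeword c
  small: if I(c) = {c}, every neighbour of c has |I| \<ge> 2; otherwise two neighbours of c
  (one of them found on a 4-cycle through c) have small share. Hence c pays at most
  2(n+1) + max(n+4, 4n-6), which is 2(3n-2) for n \<ge> 4, while the words need 6\<cdot>2^n.\<close>

definition flip :: "nat \<Rightarrow> bool list \<Rightarrow> bool list" where
  "flip i x = x[i := \<not> x ! i]"

lemma length_flip [simp]: "length (flip i x) = length x"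
  by (simp add: flip_def)

lemma nth_flip: "i < length x \<Longrightarrow> flip i x ! k = (if k = i then \<not> x ! i else x ! k)"
  by (simp add: flip_def nth_list_update)

lemma flip_flip: "i < length x \<Longrightarrow> flip i (flip i x) = x"
  by (rule nth_equalityI) (auto simp: nth_flip)

lemma flip_commute: "i < length x \<Longrightarrow> j < length x \<Longrightarrow> flip i (flip j x) = flip j (flip i x)"
  by (rule nth_equalityI) (auto simp: nth_flip)

lemma flip_in_cube: "x \<in> cube n \<Longrightarrow> flip i x \<in> cube n"
  by (simp add: cube_def)

lemma finite_cube: "finite (cube n)"
  and card_cube: "card (cube n) = 2 ^ n"
proof -
  have cube: "cube n = {xs. set xs \<subseteq> (UNIV :: bool set) \<and> length xs = n}"
    by (simp add: cube_def)
  show "finite (cube n)" unfolding cube by (rule finite_lists_length_eq) simp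
  show "card (cube n) = 2 ^ n" unfolding cube by (subst card_lists_length_eq) simp_all
qed

lemma hamming_commute: "length x = length y \<Longrightarrow> hamming x y = hamming y x"
  unfolding hamming_def by metis

lemma hamming_eq_0_iff: "length x = length y \<Longrightarrow> hamming x y = 0 \<longleftrightarrow> x = y"
  by (auto simp: hamming_def list_eq_iff_nth_eq)

lemma hamming_flip: "i < length x \<Longrightarrow> hamming x (flip i x) = 1"
proof -
  assume "i < length x"
  then have "{k. k < length x \<and> x ! k \<noteq> flip i x ! k} = {i}"
    by (auto simp: nth_flip)
  then show ?thesis by (simp add: hamming_def)
qed

lemma hamming_flip_flip:
  "i < length x \<Longrightarrow> j < length x \<Longrightarrow> i \<noteq> j \<Longrightarrow> hamming (flip i x) (flip j x) = 2"
proof -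
  assume ij: "i < length x" "j < length x" "i \<noteq> j"
  then have "{k. k < length (flip i x) \<and> flip i x ! k \<noteq> flip j x ! k} = {i, j}"
    by (auto simp: nth_flip)
  then show ?thesis using ij by (simp add: hamming_def)
qed

lemma flip_neq: "i < length x \<Longrightarrow> flip i x \<noteq> x"
  by (metis hamming_eq_0_iff hamming_flip length_flip zero_neq_one)

lemma flip_eq_flip_iff:
  assumes "i < length x" "j < length x"
  shows "flip i x = flip j x \<longleftrightarrow> i = j"
proof
  assume "flip i x = flip j x"
  then have "flip i x ! i = flip j x ! i" by (rule arg_cong)
  with assms show "i = j" by (cases "i = j") (simp_all add: nth_flip)
qed simp

lemma hamming_eq_1E:
  assumes "length x = length y" "hamming x y = 1"
  obtains i where "i < length x" "y = flip i x"
proof -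
  from assms(2) obtain i where i: "{k. k < length x \<and> x ! k \<noteq> y ! k} = {i}"
    unfolding hamming_def by (auto simp: card_1_singleton_iff)
  then have i_lt: "i < length x" by auto
  have "y = flip i x"
  proof (rule nth_equalityI)
    fix k assume "k < length y"
    then show "y ! k = flip i x ! k" using i i_lt assms(1) by (auto simp: nth_flip)
  qed (use assms(1) in simp)
  with i_lt that show ?thesis by blast
qed

lemma closed_nbhd_eq:
  assumes "c \<in> cube n"
  shows "closed_nbhd n c = insert c ((\<lambda>i. flip i c) ` {..<n})"
proof (intro equalityI subsetI)
  have c: "length c = n" using assms by (simp add: cube_def)
  fix y
  { assume "y \<in> closed_nbhd n c"
    then have y: "length y = n" "hamming c y \<le> 1"
      by (auto simp: closed_nbhd_def cube_def)
    show "y \<in> insert c ((\<lambda>i. flip i c) ` {..<n})"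
    proof (cases "hamming c y = 0")
      case True
      then show ?thesis using hamming_eq_0_iff c y by auto
    next
      case False
      with y obtain i where "i < n" "y = flip i c"
        using c by (metis hamming_eq_1E le_neq_implies_less less_one)
      then show ?thesis by auto
    qed }
  { assume "y \<in> insert c ((\<lambda>i. flip i c) ` {..<n})"
    then show "y \<in> closed_nbhd n c"
      using c hamming_eq_0_iff[of c c] hamming_flip[of _ c]
      by (auto simp: closed_nbhd_def cube_def) }
qed

lemma self_in_closed_nbhd: "x \<in> cube n \<Longrightarrow> x \<in> closed_nbhd n x"
  by (simp add: closed_nbhd_eq)

lemma flip_in_closed_nbhd: "x \<in> cube n \<Longrightarrow> i < n \<Longrightarrow> flip i x \<in> closed_nbhd n x"
  by (simp add: closed_nbhd_eq)

lemma in_closed_nbhd_commute: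
  "x \<in> cube n \<Longrightarrow> y \<in> cube n \<Longrightarrow> y \<in> closed_nbhd n x \<longleftrightarrow> x \<in> closed_nbhd n y"
  by (simp add: closed_nbhd_def cube_def hamming_commute)

lemma sum_closed_nbhd:
  assumes "c \<in> cube n"
  shows "(\<Sum>x\<in>closed_nbhd n c. g x) = g c + (\<Sum>i<n. g (flip i c))"
proof -
  have c: "length c = n" using assms by (simp add: cube_def)
  then have "inj_on (\<lambda>i. flip i c) {..<n}"
    by (auto simp: inj_on_def flip_eq_flip_iff)
  moreover have "c \<notin> (\<lambda>i. flip i c) ` {..<n}"
    using flip_neq c by (metis imageE lessThan_iff)
  ultimately show ?thesis
    by (simp add: closed_nbhd_eq[OF assms] sum.reindex)
qed

lemma card_closed_nbhd: "c \<in> cube n \<Longrightarrow> card (closed_nbhd n c) = Suc n"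
  using sum_closed_nbhd[of c n "\<lambda>_. 1 :: nat"] by simp

lemma in_I_set_self: "c \<in> C \<Longrightarrow> c \<in> cube n \<Longrightarrow> c \<in> I_set n C c"
  by (simp add: I_set_def self_in_closed_nbhd)

lemma in_I_set_flip: "c \<in> C \<Longrightarrow> c \<in> cube n \<Longrightarrow> i < n \<Longrightarrow> c \<in> I_set n C (flip i c)"
  using flip_in_closed_nbhd in_closed_nbhd_commute flip_in_cube
  by (simp add: I_set_def)

lemma code_subset_cube: "local_identifying_code n C \<Longrightarrow> C \<subseteq> cube n"
  and finite_code: "local_identifying_code n C \<Longrightarrow> finite C"
  using finite_cube finite_subset unfolding local_identifying_code_def by blast+

lemma I_set_flip_neq:
  assumes "local_identifying_code n C" "x \<in> cube n" "i < n"
  shows "I_set n C (flip i x) \<noteq> I_set n C x"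
proof -
  have "flip i x \<in> cube n" "hamming x (flip i x) = 1"
    using assms(2,3) flip_in_cube hamming_flip by (auto simp: cube_def)
  with assms(1,2) show ?thesis unfolding local_identifying_code_def by metis
qed

lemma sum_card_I_set_mult:
  assumes "C \<subseteq> cube n"
  shows "(\<Sum>x\<in>cube n. card (I_set n C x) * g x) = (\<Sum>c\<in>C. \<Sum>x\<in>closed_nbhd n c. g x)"
proof -
  have finC: "finite C" using assms finite_cube finite_subset by blast
  have "(\<Sum>x\<in>cube n. card (I_set n C x) * g x)
      = (\<Sum>x\<in>cube n. \<Sum>c\<in>C. if c \<in> closed_nbhd n x then g x else 0)"
    by (simp add: I_set_def sum.inter_restrict[OF finC, symmetric] Int_commute)
  also have "\<dots> = (\<Sum>c\<in>C. \<Sum>x\<in>cube n. if c \<in> closed_nbhd n x then g x else 0)"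
    by (rule sum.swap)
  also have "\<dots> = (\<Sum>c\<in>C. \<Sum>x\<in>cube n \<inter> {x. c \<in> closed_nbhd n x}. g x)"
    by (simp add: sum.inter_restrict[OF finite_cube])
  also have "\<dots> = (\<Sum>c\<in>C. \<Sum>x\<in>closed_nbhd n c. g x)"
  proof (rule sum.cong[OF refl])
    fix c assume "c \<in> C"
    then have "cube n \<inter> {x. c \<in> closed_nbhd n x} = closed_nbhd n c"
      using assms in_closed_nbhd_commute[of _ n c] by (auto simp: closed_nbhd_def)
    then show "(\<Sum>x\<in>cube n \<inter> {x. c \<in> closed_nbhd n x}. g x) = (\<Sum>x\<in>closed_nbhd n c. g x)"
      by simp
  qed
  finally show ?thesis .
qed

definition share :: "nat \<Rightarrow> bool list set \<Rightarrow> bool list \<Rightarrow> nat" where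
  "share n C x = (if card (I_set n C x) = 1 then 4 else if card (I_set n C x) = 2 then 1 else 0)"

lemma share_le_4: "share n C x \<le> 4"
  by (simp add: share_def)

lemma card_I_set_mult_share_ge_6:
  assumes "finite C" "I_set n C x \<noteq> {}"
  shows "6 \<le> card (I_set n C x) * (2 + share n C x)"
proof -
  have "finite (I_set n C x)" using assms(1) by (simp add: I_set_def)
  with assms(2) have "card (I_set n C x) \<ge> 1" by (simp add: Suc_le_eq card_gt_0_iff)
  then consider "card (I_set n C x) = 1" | "card (I_set n C x) = 2" | "card (I_set n C x) \<ge> 3"
    by linarith
  then show ?thesis by cases (auto simp: share_def)
qed

lemma share_le_1:
  assumes "finite C" "a \<in> I_set n C x" "b \<in> I_set n C x" "a \<noteq> b"
  shows "share n C x \<le> 1"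
proof -
  have "card {a, b} \<le> card (I_set n C x)"
    using assms by (intro card_mono) (auto simp: I_set_def)
  then show ?thesis using assms(4) by (simp add: share_def)
qed

lemma share_eq_0:
  assumes "finite C" "a \<in> I_set n C x" "b \<in> I_set n C x" "d \<in> I_set n C x"
    and "a \<noteq> b" "a \<noteq> d" "b \<noteq> d"
  shows "share n C x = 0"
proof -
  have "card {a, b, d} \<le> card (I_set n C x)"
    using assms by (intro card_mono) (auto simp: I_set_def)
  then show ?thesis using assms(5-7) by (simp add: share_def)
qed

lemma share_flip_le_1_if_I_set_singleton:
  assumes code: "local_identifying_code n C"
    and c: "c \<in> C" "I_set n C c = {c}" and i: "i < n"
  shows "share n C (flip i c) \<le> 1"
proof -
  have cQ: "c \<in> cube n" using c code_subset_cube[OF code] by blast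
  have "c \<in> I_set n C (flip i c)" "I_set n C (flip i c) \<noteq> {c}"
    using in_I_set_flip[OF c(1) cQ i] I_set_flip_neq[OF code cQ i] c(2) by auto
  then obtain b where "b \<in> I_set n C (flip i c)" "b \<noteq> c" by blast
  with \<open>c \<in> I_set n C (flip i c)\<close> show ?thesis
    using share_le_1[OF finite_code[OF code]] by blast
qed

text \<open>If I(c) = {c, z} with z = c + e_i, separation of z and c yields a codeword
  c' = z + e_j in I(z); then z has share 0 and w = c + e_j, which sees both c and c',
  has share at most 1.\<close>

lemma light_pair_if_card_I_set_eq_2:
  assumes code: "local_identifying_code n C"
    and c: "c \<in> C" "card (I_set n C c) = 2"
  obtains i j where "i < n" "j < n" "i \<noteq> j"
    "share n C c + share n C (flip i c) + share n C (flip j c) \<le> 2"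
proof -
  have finC: "finite C" using finite_code[OF code] .
  have cQ: "c \<in> cube n" using c code_subset_cube[OF code] by blast
  then have lc: "length c = n" by (simp add: cube_def)
  have cIc: "c \<in> I_set n C c" using in_I_set_self c cQ by blast
  have "card (I_set n C c - {c}) = 1"
    using c cIc finC by (simp add: I_set_def card_Diff_singleton)
  then obtain z where "I_set n C c - {c} = {z}" by (metis card_1_singletonE)
  then have Ic: "I_set n C c = {c, z}" and zc: "z \<noteq> c" using cIc by auto
  then have zC: "z \<in> C" and "z \<in> closed_nbhd n c" by (auto simp: I_set_def)
  then obtain i where i: "i < n" "z = flip i c" using zc closed_nbhd_eq[OF cQ] by auto
  have zQ: "z \<in> cube n" using i flip_in_cube[OF cQ] by simp
  have cIz: "c \<in> I_set n C z" and zIz: "z \<in> I_set n C z"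
    using in_I_set_flip[OF c(1) cQ i(1)] in_I_set_self[OF zC zQ] i by auto
  have "I_set n C z \<noteq> {c, z}" using I_set_flip_neq[OF code cQ i(1)] Ic i by simp
  then obtain c' where c'I: "c' \<in> I_set n C z" and c'c: "c' \<noteq> c" and c'z: "c' \<noteq> z"
    using cIz zIz by blast
  then have "c' \<in> closed_nbhd n z" "c' \<in> C" by (auto simp: I_set_def)
  then obtain j where j: "j < n" "c' = flip j z" using closed_nbhd_eq[OF zQ] c'z by auto
  have ji: "j \<noteq> i" using c'c i j flip_flip lc by auto
  have "c' = flip i (flip j c)" using i j flip_commute lc by simp
  then have "c' \<in> I_set n C (flip j c)"
    using flip_in_closed_nbhd[OF flip_in_cube[OF cQ] i(1)] \<open>c' \<in> C\<close> by (simp add: I_set_def)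
  then have "share n C (flip j c) \<le> 1"
    using share_le_1[OF finC _ in_I_set_flip[OF c(1) cQ j(1)] c'c] by blast
  moreover have "share n C z = 0" using share_eq_0[OF finC cIz zIz c'I zc[symmetric]] c'c c'z by auto
  moreover have "share n C c = 1" using c by (simp add: share_def)
  ultimately show ?thesis using that[OF i(1) j(1) ji[symmetric]] i by simp
qed

lemma light_pair_if_card_I_set_ge_3:
  assumes code: "local_identifying_code n C"
    and c: "c \<in> C" "card (I_set n C c) \<ge> 3"
  obtains i j where "i < n" "j < n" "i \<noteq> j"
    "share n C c + share n C (flip i c) + share n C (flip j c) \<le> 2"
proof -
  have finC: "finite C" using finite_code[OF code] .
  have cQ: "c \<in> cube n" using c code_subset_cube[OF code] by blast
  then have lc: "length c = n" by (simp add: cube_def)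
  have "finite (I_set n C c)" using finC by (simp add: I_set_def)
  moreover have "card (I_set n C c - {c}) \<ge> 2"
    using c finC in_I_set_self[OF c(1) cQ] by (simp add: I_set_def card_Diff_singleton)
  ultimately obtain a b where ab: "a \<in> I_set n C c - {c}" "b \<in> I_set n C c - {c}" "a \<noteq> b"
    by (metis card_le_Suc0_iff_eq finite_Diff not_less_eq_eq numeral_2_eq_2)
  then obtain i j where i: "i < n" "a = flip i c" and j: "j < n" "b = flip j c"
    using closed_nbhd_eq[OF cQ] by (auto simp: I_set_def)
  have share_flip: "share n C (flip k c) \<le> 1" if "k < n" "flip k c \<in> C" for k
    using share_le_1[OF finC in_I_set_self[OF that(2)] in_I_set_flip[OF c(1) cQ that(1)]]
      flip_in_cube[OF cQ] flip_neq lc that(1) by auto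
  have "a \<in> C" "b \<in> C" using ab by (auto simp: I_set_def)
  then have "share n C (flip i c) \<le> 1" "share n C (flip j c) \<le> 1"
    using share_flip i j by auto
  moreover have "share n C c = 0" using c by (simp add: share_def)
  moreover have "i \<noteq> j" using ab i j by auto
  ultimately show ?thesis using that[OF i(1) j(1)] by simp
qed

lemma sum_lessThan_le_pair:
  fixes f :: "nat \<Rightarrow> nat"
  assumes "i < n" "j < n" "i \<noteq> j" "\<And>k. k < n \<Longrightarrow> f k \<le> b"
  shows "(\<Sum>k<n. f k) \<le> f i + f j + b * (n - 2)"
proof -
  have "(\<Sum>k<n. f k) = f i + f j + (\<Sum>k\<in>{..<n} - {i, j}. f k)"
    using assms(1-3) by (simp add: sum.remove[of "{..<n}" i] sum.remove[of "{..<n} - {i}" j]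
        Diff_insert2[symmetric])
  also have "(\<Sum>k\<in>{..<n} - {i, j}. f k) \<le> b * card ({..<n} - {i, j})"
    using sum_bounded_above[of "{..<n} - {i, j}" f b] assms(4) by (simp add: mult.commute)
  also have "card ({..<n} - {i, j}) = n - 2"
    using assms(1-3) by (simp add: card_Diff_subset)
  finally show ?thesis by simp
qed

lemma sum_share_closed_nbhd_le:
  assumes code: "local_identifying_code n C" and c: "c \<in> C"
  shows "(\<Sum>x\<in>closed_nbhd n c. share n C x) \<le> max (n + 4) (4 * n - 6)"
proof -
  have cQ: "c \<in> cube n" using c code_subset_cube[OF code] by blast
  have "card (I_set n C c) \<noteq> 0"
    using in_I_set_self[OF c cQ] finite_code[OF code] by (auto simp: I_set_def)
  then consider "card (I_set n C c) = 1" | "card (I_set n C c) = 2 \<or> card (I_set n C c) \<ge> 3"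
    by linarith
  then show ?thesis
  proof cases
    case 1
    then have "I_set n C c = {c}"
      using in_I_set_self[OF c cQ] by (metis card_1_singletonE singletonD)
    then have "(\<Sum>i<n. share n C (flip i c)) \<le> (\<Sum>i<n. 1)"
      using share_flip_le_1_if_I_set_singleton[OF code c] by (intro sum_mono) simp
    moreover have "share n C c = 4" using 1 by (simp add: share_def)
    ultimately show ?thesis using sum_closed_nbhd[OF cQ, of "share n C"] by simp
  next
    case 2
    then obtain i j where ij: "i < n" "j < n" "i \<noteq> j"
      "share n C c + share n C (flip i c) + share n C (flip j c) \<le> 2"
      using light_pair_if_card_I_set_eq_2[OF code c] light_pair_if_card_I_set_ge_3[OF code c]
      by blast
    then have "(\<Sum>k<n. share n C (flip k c))
        \<le> share n C (flip i c) + share n C (flip j c) + 4 * (n - 2)"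
      by (intro sum_lessThan_le_pair) (simp_all add: share_le_4)
    then show ?thesis using ij sum_closed_nbhd[OF cQ, of "share n C"] by simp
  qed
qed

lemma card_code_lower_bound:
  assumes code: "local_identifying_code n C" and n: "n \<ge> 3"
  shows "3 * 2 ^ n \<le> (3 * n - 2) * card C"
proof -
  have CQ: "C \<subseteq> cube n" using code_subset_cube[OF code] .
  have "6 * 2 ^ n = (\<Sum>x\<in>cube n. 6::nat)" by (simp add: card_cube)
  also have "\<dots> \<le> (\<Sum>x\<in>cube n. card (I_set n C x) * (2 + share n C x))"
    using card_I_set_mult_share_ge_6[OF finite_code[OF code]] code
    by (intro sum_mono) (auto simp: local_identifying_code_def)
  also have "\<dots> = (\<Sum>c\<in>C. \<Sum>x\<in>closed_nbhd n c. 2 + share n C x)"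
    by (rule sum_card_I_set_mult[OF CQ])
  also have "\<dots> = (\<Sum>c\<in>C. 2 * Suc n + (\<Sum>x\<in>closed_nbhd n c. share n C x))"
  proof (rule sum.cong[OF refl])
    fix c assume "c \<in> C"
    then have "card (closed_nbhd n c) = Suc n" using CQ card_closed_nbhd by blast
    then show "(\<Sum>x\<in>closed_nbhd n c. 2 + share n C x)
        = 2 * Suc n + (\<Sum>x\<in>closed_nbhd n c. share n C x)"
      by (simp only: sum.distrib sum_constant) simp
  qed
  also have "\<dots> \<le> (\<Sum>c\<in>C. 2 * Suc n + max (n + 4) (4 * n - 6))"
    using sum_share_closed_nbhd_le[OF code] by (intro sum_mono) simp
  finally have total: "6 * 2 ^ n \<le> card C * (2 * Suc n + max (n + 4) (4 * n - 6))"
    by (simp add: mult.commute)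
  show ?thesis
  proof (cases "n = 3")
    case True
    with total have "4 \<le> card C" by simp
    with True show ?thesis by simp
  next
    case False
    with n have "2 * Suc n + max (n + 4) (4 * n - 6) = 2 * (3 * n - 2)" by simp
    with total have "6 * 2 ^ n \<le> card C * (2 * (3 * n - 2))" by (simp only:)
    then show ?thesis by (simp add: mult.commute mult.left_commute)
  qed
qed

lemma local_identifying_code_cube:
  assumes "n \<ge> 2"
  shows "local_identifying_code n (cube n)"
proof -
  have I: "I_set n (cube n) x = closed_nbhd n x" for x
    by (auto simp: I_set_def closed_nbhd_def)
  have "replicate n True \<in> cube n" by (simp add: cube_def)
  moreover have "closed_nbhd n x \<noteq> closed_nbhd n y"
    if x: "x \<in> cube n" and y: "y \<in> cube n" and xy: "hamming x y = 1" for x y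
  proof -
    have lx: "length x = n" and ly: "length y = n" using x y by (auto simp: cube_def)
    then obtain i where i: "i < n" "y = flip i x" using xy by (metis hamming_eq_1E)
    define j where "j = (if i = 0 then 1 else 0::nat)"
    have j: "j < n" "j \<noteq> i" using assms by (auto simp: j_def)
    then have "hamming y (flip j x) = 2" using hamming_flip_flip[of i x j] i lx by simp
    then have "flip j x \<notin> closed_nbhd n y" by (simp add: closed_nbhd_def)
    then show ?thesis using flip_in_closed_nbhd[OF x j(1)] by blast
  qed
  ultimately show ?thesis
    unfolding local_identifying_code_def I using self_in_closed_nbhd by blast
qed

theorem mainTheorem5:
  fixes n :: nat
  assumes "n \<ge> 3"
  shows "real (M_L n) \<ge> 3 * 2 ^ n / (3 * real n - 2)"
proof -
  have "local_identifying_code n (cube n)" using assms by (intro local_identifying_code_cube) simp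
  then have "\<exists>k C. local_identifying_code n C \<and> card C = k" by blast
  then have "\<exists>C. local_identifying_code n C \<and> card C = M_L n"
    unfolding M_L_def by (rule LeastI_ex)
  then obtain C where code: "local_identifying_code n C" and "card C = M_L n" by blast
  with card_code_lower_bound[OF code assms]
  have "real (3 * 2 ^ n) \<le> real ((3 * n - 2) * M_L n)" by (simp only: of_nat_le_iff)
  then have "3 * 2 ^ n \<le> (3 * real n - 2) * real (M_L n)"
    using assms by (simp add: of_nat_diff)
  moreover have "3 * real n - 2 > 0" using assms by simp
  ultimately show ?thesis by (simp add: divide_le_eq mult.commute)
qed

end
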